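(* Let $G$ and $H$ be connected graphs, each with at least $2$ vertices. Then $$\gamma(G\times H)=\frac{1}{\frac{1}{\gamma(G)}+\frac{1}{\gamma(H)}}.$$
   Context: For a finite simple undirected graph $G$ with $n$ vertices, let $\mathcal{F}=\{x\in\mathbb{R}^{V(G)} : \sum_{v} x_v = 0,\ \|x\|_\infty = 1\}$, for $x\in\mathcal{F}$ let $\gamma_x(G)=\max_{uv\in E(G)}|x_u-x_v|$, and $\gamma(G)=\min_{x\in\mathcal{F}}\gamma_x(G)$. The Cartesian product $G\times H$ has vertex set $V(G)\times V(H)$, with $(u_1,v_1)\sim(u_2,v_2)$ iff either $u_1\sim u_2$ in $G$ and $v_1=v_2$, or $u_1=u_2$ and $v_1\sim v_2$ in $H$. *)

theory Defs
  imports Complex_Main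
begin

definition simple_graph :: "'a set \<Rightarrow> ('a \<Rightarrow> 'a \<Rightarrow> bool) \<Rightarrow> bool" where
  "simple_graph V E \<longleftrightarrow> finite V \<and> (\<forall>u v. E u v \<longrightarrow> u \<in> V \<and> v \<in> V)
     \<and> (\<forall>u v. E u v \<longrightarrow> E v u) \<and> (\<forall>v. \<not> E v v)"

definition connected_graph :: "'a set \<Rightarrow> ('a \<Rightarrow> 'a \<Rightarrow> bool) \<Rightarrow> bool" where
  "connected_graph V E \<longleftrightarrow> V \<noteq> {} \<and> (\<forall>u\<in>V. \<forall>v\<in>V. E\<^sup>*\<^sup>* u v)"

definition sup_norm :: "'a set \<Rightarrow> ('a \<Rightarrow> real) \<Rightarrow> real" where
  "sup_norm V x = Max ((\<lambda>v. \<bar>x v\<bar>) ` V)"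

text \<open>The feasible set F (only values on V matter).\<close>
definition feasible :: "'a set \<Rightarrow> ('a \<Rightarrow> real) set" where
  "feasible V = {x. (\<Sum>v\<in>V. x v) = 0 \<and> sup_norm V x = 1}"

definition gamma_x :: "'a set \<Rightarrow> ('a \<Rightarrow> 'a \<Rightarrow> bool) \<Rightarrow> ('a \<Rightarrow> real) \<Rightarrow> real" where
  "gamma_x V E x = Max {\<bar>x u - x v\<bar> | u v. u \<in> V \<and> v \<in> V \<and> E u v}"

definition gamma :: "'a set \<Rightarrow> ('a \<Rightarrow> 'a \<Rightarrow> bool) \<Rightarrow> real" where
  "gamma V E = Inf (gamma_x V E ` feasible V)"

fun cart_edge :: "('a \<Rightarrow> 'a \<Rightarrow> bool) \<Rightarrow> ('b \<Rightarrow> 'b \<Rightarrow> bool) \<Rightarrow> 'a \<times> 'b \<Rightarrow> 'a \<times> 'b \<Rightarrow> bool" where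
  "cart_edge EG EH (u1, v1) (u2, v2) \<longleftrightarrow> (EG u1 u2 \<and> v1 = v2) \<or> (u1 = u2 \<and> EH v1 v2)"

end

theory Submission
  imports Defs
begin

(* For a connected graph, gamma(G) is the best constant in the Poincare-type inequality
   gamma(G) * |y|_inf <= gamma_y(G) for zero-sum y; it is positive because two values of a
   feasible x at distance at least 1 are joined by a walk of bounded length.

   Lower bound: average a feasible x on G x H over H to get a zero-sum g on G, and write
   x(u0, v) = g(u0) + h(v) with h of zero sum on H. Both g and h have edge differences at most
   gamma_x(G x H), so at a vertex (u0, v0) where |x| = 1 we get
   1 <= gamma_x(G x H) (1/gamma(G) + 1/gamma(H)).

   Upper bound: for feasible a on G and b on H, normalised to take the value 1 somewhere, the
   combination s a(u) + t b(v) with s + t = 1 and s : t = 1/gamma_a(G) : 1/gamma_b(H) is feasible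
   on G x H with edge differences at most 1/(1/gamma_a(G) + 1/gamma_b(H)); taking infima over a
   and b gives the reverse inequality. *)

lemma abs_le_sup_norm: "finite V \<Longrightarrow> v \<in> V \<Longrightarrow> \<bar>x v\<bar> \<le> sup_norm V x"
  unfolding sup_norm_def by (rule Max_ge) auto

lemma sup_norm_le:
  "finite V \<Longrightarrow> V \<noteq> {} \<Longrightarrow> (\<And>v. v \<in> V \<Longrightarrow> \<bar>x v\<bar> \<le> c) \<Longrightarrow> sup_norm V x \<le> c"
  unfolding sup_norm_def by (subst Max_le_iff) auto

lemma sup_norm_attained:
  assumes "finite V" "V \<noteq> {}"
  obtains v where "v \<in> V" "\<bar>x v\<bar> = sup_norm V x"
proof -
  have "sup_norm V x \<in> (\<lambda>v. \<bar>x v\<bar>) ` V"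
    unfolding sup_norm_def using assms by (intro Max_in) auto
  then show ?thesis using that by auto
qed

lemma sup_norm_mult:
  assumes "finite V" "V \<noteq> {}"
  shows "sup_norm V (\<lambda>v. c * x v) = \<bar>c\<bar> * sup_norm V x"
proof -
  have "mono ((*) \<bar>c\<bar>)" by (simp add: monoI mult_left_mono)
  then have "\<bar>c\<bar> * sup_norm V x = Max ((*) \<bar>c\<bar> ` (\<lambda>v. \<bar>x v\<bar>) ` V)"
    unfolding sup_norm_def using assms by (intro mono_Max_commute) auto
  then show ?thesis unfolding sup_norm_def by (simp add: abs_mult image_image)
qed

lemma gamma_x_eq_Max_image:
  "gamma_x V E x = Max ((\<lambda>(u, v). \<bar>x u - x v\<bar>) ` {(u, v) \<in> V \<times> V. E u v})"
  unfolding gamma_x_def by (rule arg_cong[where f = Max]) auto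

lemma edge_diff_le_gamma_x:
  "finite V \<Longrightarrow> u \<in> V \<Longrightarrow> v \<in> V \<Longrightarrow> E u v \<Longrightarrow> \<bar>x u - x v\<bar> \<le> gamma_x V E x"
  unfolding gamma_x_eq_Max_image by (rule Max_ge) (auto intro: finite_subset[of _ "V \<times> V"])

lemma gamma_x_le:
  assumes "finite V" "u \<in> V" "v \<in> V" "E u v"
    and "\<And>u v. u \<in> V \<Longrightarrow> v \<in> V \<Longrightarrow> E u v \<Longrightarrow> \<bar>x u - x v\<bar> \<le> c"
  shows "gamma_x V E x \<le> c"
  unfolding gamma_x_eq_Max_image using assms
  by (subst Max_le_iff) (auto intro!: finite_imageI intro: finite_subset[of _ "V \<times> V"])

lemma gamma_x_nonneg:
  "finite V \<Longrightarrow> u \<in> V \<Longrightarrow> v \<in> V \<Longrightarrow> E u v \<Longrightarrow> 0 \<le> gamma_x V E x"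
  by (rule order_trans[OF abs_ge_zero edge_diff_le_gamma_x])

lemma gamma_x_mult:
  assumes "finite V" "u \<in> V" "v \<in> V" "E u v"
  shows "gamma_x V E (\<lambda>v. c * x v) = \<bar>c\<bar> * gamma_x V E x"
proof -
  have "mono ((*) \<bar>c\<bar>)" by (simp add: monoI mult_left_mono)
  then have "\<bar>c\<bar> * gamma_x V E x
      = Max ((*) \<bar>c\<bar> ` (\<lambda>(u, v). \<bar>x u - x v\<bar>) ` {(u, v) \<in> V \<times> V. E u v})"
    unfolding gamma_x_eq_Max_image using assms
    by (intro mono_Max_commute) (auto intro: finite_subset[of _ "V \<times> V"])
  then show ?thesis
    unfolding gamma_x_eq_Max_image
    by (simp add: image_image abs_mult right_diff_distrib[symmetric] case_prod_beta')
qed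

lemma le_gamma:
  "feasible V \<noteq> {} \<Longrightarrow> (\<And>x. x \<in> feasible V \<Longrightarrow> c \<le> gamma_x V E x) \<Longrightarrow> c \<le> gamma V E"
  unfolding gamma_def by (rule cInf_greatest) auto

lemma gamma_le_gamma_x:
  assumes "finite V" "u \<in> V" "v \<in> V" "E u v" "x \<in> feasible V"
  shows "gamma V E \<le> gamma_x V E x"
  unfolding gamma_def using assms gamma_x_nonneg[of V u v E]
  by (intro cInf_lower) (auto simp: bdd_below_def)

lemma feasible_nonempty:
  assumes "finite V" "u \<in> V" "w \<in> V" "u \<noteq> w"
  shows "feasible V \<noteq> {}"
proof -
  define x :: "_ \<Rightarrow> real" where "x v = (if v = u then 1 else if v = w then -1 else 0)" for v
  have "(\<Sum>v\<in>V. x v) = 0"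
    using assms by (simp add: x_def sum.If_cases Int_absorb1 insert_absorb insert_Diff_if)
  moreover have "sup_norm V x = 1"
  proof (rule antisym)
    show "sup_norm V x \<le> 1" using assms by (intro sup_norm_le) (auto simp: x_def)
    show "1 \<le> sup_norm V x" using abs_le_sup_norm[OF assms(1,2), of x] by (simp add: x_def)
  qed
  ultimately show ?thesis unfolding feasible_def by blast
qed

lemma gamma_mult_sup_norm_le:
  assumes fin: "finite V" and edge: "u \<in> V" "v \<in> V" "E u v" and sum0: "(\<Sum>w\<in>V. y w) = 0"
  shows "gamma V E * sup_norm V y \<le> gamma_x V E y"
proof -
  define s where "s = sup_norm V y"
  have "0 \<le> s" unfolding s_def using abs_le_sup_norm[OF fin edge(1), of y] by linarith
  show ?thesis
  proof (cases "s = 0")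
    case True
    then show ?thesis using gamma_x_nonneg[of V u v E y] fin edge by (simp add: s_def)
  next
    case False
    with \<open>0 \<le> s\<close> have "0 < s" by simp
    define z where "z w = 1 / s * y w" for w
    have "(\<Sum>w\<in>V. z w) = 0" unfolding z_def by (simp add: sum_divide_distrib[symmetric] sum0)
    moreover have "sup_norm V z = 1"
      unfolding z_def using fin edge \<open>0 < s\<close> by (subst sup_norm_mult) (auto simp: s_def)
    ultimately have "z \<in> feasible V" unfolding feasible_def by blast
    then have "gamma V E \<le> gamma_x V E z" by (rule gamma_le_gamma_x[of V u v E, OF fin edge])
    also have "\<dots> = gamma_x V E y / s"
      unfolding z_def gamma_x_mult[of V u v E, OF fin edge] using \<open>0 < s\<close> by simp
    finally have "gamma V E \<le> gamma_x V E y / s" .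
    then show ?thesis using \<open>0 < s\<close> by (simp add: s_def le_divide_eq)
  qed
qed

lemma abs_diff_le_walk:
  assumes "(E ^^ n) u w" and "\<And>a b. E a b \<Longrightarrow> \<bar>x a - x b\<bar> \<le> d"
  shows "\<bar>x u - x w\<bar> \<le> real n * d"
  using assms(1)
proof (induction n arbitrary: w)
  case 0
  then show ?case by simp
next
  case (Suc n)
  then obtain y where "(E ^^ n) u y" "E y w" by (auto elim: relpowp_Suc_E)
  then have "\<bar>x u - x y\<bar> \<le> real n * d" "\<bar>x y - x w\<bar> \<le> d" using Suc.IH assms(2) by auto
  then show ?case by (simp add: algebra_simps)
qed

lemma feasible_far_pair:
  assumes fin: "finite V" and "V \<noteq> {}" and x: "x \<in> feasible V"
  obtains u w where "u \<in> V" "w \<in> V" "1 \<le> \<bar>x u - x w\<bar>"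
proof -
  obtain u where u: "u \<in> V" "\<bar>x u\<bar> = 1"
    using sup_norm_attained[OF assms(1,2), of x] x unfolding feasible_def by auto
  define \<sigma> where "\<sigma> = x u"
  have "(\<Sum>w\<in>V. \<sigma> * x w) = 0" using x unfolding feasible_def by (simp add: sum_distrib_left[symmetric])
  then obtain w where w: "w \<in> V" "\<sigma> * x w \<le> 0"
    using sum_pos[OF fin \<open>V \<noteq> {}\<close>, of "\<lambda>w. \<sigma> * x w"] by force
  have "\<sigma> * \<sigma> = 1" using u by (metis \<sigma>_def abs_mult_self_eq mult_1_right)
  then have "\<bar>x u - x w\<bar> = \<bar>1 - \<sigma> * x w\<bar>"
    by (metis \<sigma>_def abs_mult mult_1_left right_diff_distrib u(2))
  then show ?thesis using that u(1) w by simp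
qed

lemma feasible_normalized:
  assumes fin: "finite V" and edge: "u \<in> V" "v \<in> V" "E u v" and x: "x \<in> feasible V"
  obtains x' w where "x' \<in> feasible V" "gamma_x V E x' = gamma_x V E x" "w \<in> V" "x' w = 1"
proof -
  have "V \<noteq> {}" using edge by auto
  then obtain w where w: "w \<in> V" "\<bar>x w\<bar> = 1"
    using sup_norm_attained[OF fin, of x] x unfolding feasible_def by auto
  define x' where "x' v = x w * x v" for v
  have "(\<Sum>v\<in>V. x' v) = 0" using x unfolding feasible_def x'_def by (simp add: sum_distrib_left[symmetric])
  moreover have "sup_norm V x' = 1"
    using x w fin \<open>V \<noteq> {}\<close> unfolding feasible_def x'_def by (simp add: sup_norm_mult)
  moreover have "gamma_x V E x' = gamma_x V E x"
    unfolding x'_def using gamma_x_mult[of V u v E] fin edge w by simp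
  moreover have "x' w = 1" unfolding x'_def using w by (metis abs_mult_self_eq mult_1_right)
  ultimately show ?thesis using that w(1) unfolding feasible_def by blast
qed

lemma feasible_product_combination:
  assumes fin: "finite VG" "finite VH" and a: "a \<in> feasible VG" and b: "b \<in> feasible VH"
    and u0: "u0 \<in> VG" "a u0 = 1" and v0: "v0 \<in> VH" "b v0 = 1"
    and st: "0 \<le> s" "0 \<le> t" "s + t = 1"
  shows "(\<lambda>(u, v). s * a u + t * b v) \<in> feasible (VG \<times> VH)"
proof -
  have "(\<Sum>p\<in>VG \<times> VH. (\<lambda>(u, v). s * a u + t * b v) p) = (\<Sum>u\<in>VG. \<Sum>v\<in>VH. s * a u + t * b v)"
    by (simp add: sum.cartesian_product)
  also have "\<dots> = 0"
    using a b by (simp add: feasible_def sum.distrib sum_distrib_left[symmetric] sum.swap[of _ VG VH])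
  finally have "(\<Sum>p\<in>VG \<times> VH. (\<lambda>(u, v). s * a u + t * b v) p) = 0" .
  moreover have "sup_norm (VG \<times> VH) (\<lambda>(u, v). s * a u + t * b v) = 1"
  proof (rule antisym)
    show "sup_norm (VG \<times> VH) (\<lambda>(u, v). s * a u + t * b v) \<le> 1"
    proof (rule sup_norm_le)
      fix p assume "p \<in> VG \<times> VH"
      then have "\<bar>a (fst p)\<bar> \<le> 1" "\<bar>b (snd p)\<bar> \<le> 1"
        using a b abs_le_sup_norm[OF fin(1), of "fst p" a] abs_le_sup_norm[OF fin(2), of "snd p" b]
        by (auto simp: feasible_def)
      have "\<bar>s * a (fst p) + t * b (snd p)\<bar> \<le> s * \<bar>a (fst p)\<bar> + t * \<bar>b (snd p)\<bar>"
        using st abs_triangle_ineq[of "s * a (fst p)" "t * b (snd p)"] by (simp add: abs_mult)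
      also have "\<dots> \<le> s * 1 + t * 1"
        using st \<open>\<bar>a (fst p)\<bar> \<le> 1\<close> \<open>\<bar>b (snd p)\<bar> \<le> 1\<close> by (intro add_mono mult_left_mono) auto
      finally show "\<bar>(\<lambda>(u, v). s * a u + t * b v) p\<bar> \<le> 1" using st by (simp add: case_prod_beta)
    qed (use fin u0 v0 in auto)
    show "1 \<le> sup_norm (VG \<times> VH) (\<lambda>(u, v). s * a u + t * b v)"
      using abs_le_sup_norm[of "VG \<times> VH" "(u0, v0)" "\<lambda>(u, v). s * a u + t * b v"] fin u0 v0 st
      by simp
  qed
  ultimately show ?thesis unfolding feasible_def by blast
qed

locale nontrivial_connected_graph =
  fixes V :: "'a set" and E :: "'a \<Rightarrow> 'a \<Rightarrow> bool"
  assumes simple: "simple_graph V E" and connected: "connected_graph V E"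
    and two_le_card: "2 \<le> card V"
begin

lemma finite_vertices: "finite V"
  using simple unfolding simple_graph_def by blast

lemma edge_vertices: "E u v \<Longrightarrow> u \<in> V \<and> v \<in> V"
  using simple unfolding simple_graph_def by blast

lemma distinct_vertices:
  obtains u w where "u \<in> V" "w \<in> V" "u \<noteq> w"
  using two_le_card card_le_Suc0_iff_eq[OF finite_vertices] by fastforce

lemma edge_exists:
  obtains u v where "u \<in> V" "v \<in> V" "E u v"
proof -
  obtain u w where "u \<in> V" "w \<in> V" "u \<noteq> w" by (rule distinct_vertices)
  then have "E\<^sup>*\<^sup>* u w" using connected unfolding connected_graph_def by blast
  with \<open>u \<noteq> w\<close> obtain y where "E u y" by (auto elim: converse_rtranclpE)
  then show ?thesis using that edge_vertices by blast
qed

lemma feasible_ne: "feasible V \<noteq> {}"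
  using distinct_vertices feasible_nonempty[OF finite_vertices] by metis

lemma gamma_le_feasible: "x \<in> feasible V \<Longrightarrow> gamma V E \<le> gamma_x V E x"
  by (rule edge_exists) (rule gamma_le_gamma_x[OF finite_vertices])

lemma walk_length_bound:
  obtains N where "\<And>u w. u \<in> V \<Longrightarrow> w \<in> V \<Longrightarrow> \<exists>n\<le>N. (E ^^ n) u w"
proof -
  have "\<forall>p\<in>V \<times> V. \<exists>n. (E ^^ n) (fst p) (snd p)"
    using connected unfolding connected_graph_def by (auto intro: rtranclp_imp_relpowp)
  then obtain len where len: "\<And>p. p \<in> V \<times> V \<Longrightarrow> (E ^^ len p) (fst p) (snd p)" by metis
  have "finite (len ` (V \<times> V))" using finite_vertices by simp
  then obtain N where N: "\<And>p. p \<in> V \<times> V \<Longrightarrow> len p \<le> N"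
    by (auto simp: finite_nat_set_iff_bounded_le)
  show ?thesis
  proof (rule that)
    fix u w assume "u \<in> V" "w \<in> V"
    then show "\<exists>n\<le>N. (E ^^ n) u w" using len[of "(u, w)"] N[of "(u, w)"] by auto
  qed
qed

lemma gamma_pos: "0 < gamma V E"
proof -
  obtain N where walk: "\<And>u w. u \<in> V \<Longrightarrow> w \<in> V \<Longrightarrow> \<exists>n\<le>N. (E ^^ n) u w"
    using walk_length_bound by blast
  obtain u1 u2 where edge: "u1 \<in> V" "u2 \<in> V" "E u1 u2" by (rule edge_exists)
  have "1 / (real N + 1) \<le> gamma_x V E x" if x: "x \<in> feasible V" for x
  proof -
    obtain u w where uw: "u \<in> V" "w \<in> V" "1 \<le> \<bar>x u - x w\<bar>"
      using feasible_far_pair[OF finite_vertices _ x] distinct_vertices by blast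
    then obtain n where "n \<le> N" "(E ^^ n) u w" using walk by blast
    then have "\<bar>x u - x w\<bar> \<le> real n * gamma_x V E x"
      using abs_diff_le_walk edge_diff_le_gamma_x[OF finite_vertices] edge_vertices by metis
    with uw(3) have "1 \<le> real n * gamma_x V E x" by linarith
    also have "\<dots> \<le> (real N + 1) * gamma_x V E x"
      using \<open>n \<le> N\<close> gamma_x_nonneg[of V u1 u2 E, OF finite_vertices edge] by (intro mult_right_mono) auto
    finally show ?thesis by (simp add: divide_le_eq mult.commute add_pos_nonneg)
  qed
  then have "1 / (real N + 1) \<le> gamma V E" using feasible_ne le_gamma by blast
  moreover have "0 < 1 / (real N + 1)" by simp
  ultimately show ?thesis by linarith
qed

lemma gamma_x_pos: "x \<in> feasible V \<Longrightarrow> 0 < gamma_x V E x"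
  using gamma_pos gamma_le_feasible by (rule order_less_le_trans)

lemma gamma_mult_abs_le:
  assumes "(\<Sum>w\<in>V. y w) = 0" and "w \<in> V"
  shows "gamma V E * \<bar>y w\<bar> \<le> gamma_x V E y"
proof -
  obtain u v where edge: "u \<in> V" "v \<in> V" "E u v" by (rule edge_exists)
  have "gamma V E * \<bar>y w\<bar> \<le> gamma V E * sup_norm V y"
    using abs_le_sup_norm[OF finite_vertices assms(2)] gamma_pos by (simp add: mult_left_mono)
  also have "\<dots> \<le> gamma_x V E y"
    by (rule gamma_mult_sup_norm_le[of V u v E, OF finite_vertices edge assms(1)])
  finally show ?thesis .
qed

lemma inverse_gamma_le:
  assumes "\<And>x. x \<in> feasible V \<Longrightarrow> 1 / gamma_x V E x \<le> k"
  shows "1 / gamma V E \<le> k"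
proof -
  obtain x0 where x0: "x0 \<in> feasible V" using feasible_ne by blast
  then have "0 < 1 / gamma_x V E x0" using gamma_x_pos by simp
  also have "\<dots> \<le> k" by (rule assms[OF x0])
  finally have "0 < k" .
  have "1 / k \<le> gamma_x V E x" if "x \<in> feasible V" for x
    using assms[OF that] gamma_x_pos[OF that] \<open>0 < k\<close> by (simp add: divide_le_eq mult.commute)
  then have "1 / k \<le> gamma V E" using feasible_ne le_gamma by blast
  then show ?thesis using gamma_pos \<open>0 < k\<close> by (simp add: divide_le_eq mult.commute)
qed

end

locale cartesian_graph_pair =
  G: nontrivial_connected_graph VG EG + H: nontrivial_connected_graph VH EH
  for VG :: "'a set" and EG and VH :: "'b set" and EH
begin

abbreviation VGH where "VGH \<equiv> VG \<times> VH"
abbreviation EGH where "EGH \<equiv> cart_edge EG EH"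

lemma finite_product: "finite VGH"
  using G.finite_vertices H.finite_vertices by simp

lemma product_edge_exists:
  obtains p q where "p \<in> VGH" "q \<in> VGH" "EGH p q"
proof -
  obtain u u' where "u \<in> VG" "u' \<in> VG" "EG u u'" by (rule G.edge_exists)
  moreover obtain v where "v \<in> VH" using H.edge_exists by metis
  ultimately show ?thesis using that[of "(u, v)" "(u', v)"] by simp
qed

lemma feasible_product_ne: "feasible VGH \<noteq> {}"
proof -
  obtain u u' where "u \<in> VG" "u' \<in> VG" "u \<noteq> u'" by (rule G.distinct_vertices)
  moreover obtain v where "v \<in> VH" using H.edge_exists by metis
  ultimately show ?thesis using feasible_nonempty[OF finite_product, of "(u, v)" "(u', v)"] by simp
qed

lemma inverse_gamma_sum_pos: "0 < 1 / gamma VG EG + 1 / gamma VH EH"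
  using G.gamma_pos H.gamma_pos by (intro add_pos_pos) simp_all

lemma gamma_product_le_gamma_x:
  "x \<in> feasible VGH \<Longrightarrow> gamma VGH EGH \<le> gamma_x VGH EGH x"
  by (rule product_edge_exists) (rule gamma_le_gamma_x[OF finite_product])

lemma gamma_x_average_le:
  "gamma_x VG EG (\<lambda>u. (\<Sum>v\<in>VH. x (u, v)) / card VH) \<le> gamma_x VGH EGH x"
proof -
  define d where "d = gamma_x VGH EGH x"
  have "0 < card VH" using H.two_le_card by linarith
  obtain u1 u2 where edge: "u1 \<in> VG" "u2 \<in> VG" "EG u1 u2" by (rule G.edge_exists)
  show ?thesis
    unfolding d_def[symmetric]
  proof (rule gamma_x_le[of VG u1 u2 EG, OF G.finite_vertices edge])
    fix u u' assume "u \<in> VG" "u' \<in> VG" "EG u u'"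
    then have diff: "\<bar>x (u, v) - x (u', v)\<bar> \<le> d" if "v \<in> VH" for v
      unfolding d_def using that by (intro edge_diff_le_gamma_x[OF finite_product]) auto
    have "\<bar>(\<Sum>v\<in>VH. x (u, v)) / card VH - (\<Sum>v\<in>VH. x (u', v)) / card VH\<bar>
        = \<bar>\<Sum>v\<in>VH. x (u, v) - x (u', v)\<bar> / card VH"
      by (simp add: diff_divide_distrib[symmetric] sum_subtractf)
    also have "\<dots> \<le> (\<Sum>v\<in>VH. \<bar>x (u, v) - x (u', v)\<bar>) / card VH"
      by (intro divide_right_mono sum_abs) auto
    also have "\<dots> \<le> (\<Sum>v\<in>VH. d) / card VH"
      using diff by (intro divide_right_mono sum_mono) auto
    also have "\<dots> = d" using \<open>0 < card VH\<close> by simp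
    finally show "\<bar>(\<Sum>v\<in>VH. x (u, v)) / card VH - (\<Sum>v\<in>VH. x (u', v)) / card VH\<bar> \<le> d" .
  qed
qed

lemma gamma_x_fiber_le:
  assumes "u \<in> VG"
  shows "gamma_x VH EH (\<lambda>v. x (u, v) - c) \<le> gamma_x VGH EGH x"
proof -
  obtain v1 v2 where edge: "v1 \<in> VH" "v2 \<in> VH" "EH v1 v2" by (rule H.edge_exists)
  show ?thesis
  proof (rule gamma_x_le[of VH v1 v2 EH, OF H.finite_vertices edge])
    fix v v' assume "v \<in> VH" "v' \<in> VH" "EH v v'"
    then show "\<bar>(x (u, v) - c) - (x (u, v') - c)\<bar> \<le> gamma_x VGH EGH x"
      using assms by (simp add: edge_diff_le_gamma_x[OF finite_product])
  qed
qed

lemma one_le_gamma_x_product: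
  assumes x: "x \<in> feasible VGH"
  shows "1 \<le> (1 / gamma VG EG + 1 / gamma VH EH) * gamma_x VGH EGH x"
proof -
  define d where "d = gamma_x VGH EGH x"
  define g where "g u = (\<Sum>v\<in>VH. x (u, v)) / card VH" for u
  have "0 < card VH" using H.two_le_card by linarith
  have "VGH \<noteq> {}" using G.two_le_card H.two_le_card by auto
  then obtain p where p: "p \<in> VGH" "\<bar>x p\<bar> = sup_norm VGH x"
    by (rule sup_norm_attained[OF finite_product])
  obtain u0 v0 where "p = (u0, v0)" by (cases p)
  with p x have uv0: "u0 \<in> VG" "v0 \<in> VH" "\<bar>x (u0, v0)\<bar> = 1" by (auto simp: feasible_def)
  define h where "h v = x (u0, v) - g u0" for v
  have "(\<Sum>u\<in>VG. g u) = 0"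
    using x unfolding g_def feasible_def
    by (simp add: sum_divide_distrib[symmetric] sum.cartesian_product)
  then have "gamma VG EG * \<bar>g u0\<bar> \<le> gamma_x VG EG g" by (rule G.gamma_mult_abs_le[OF _ uv0(1)])
  also have "\<dots> \<le> d" unfolding g_def d_def by (rule gamma_x_average_le)
  finally have g_le: "\<bar>g u0\<bar> \<le> d / gamma VG EG"
    using G.gamma_pos by (simp add: le_divide_eq mult.commute)
  have "(\<Sum>v\<in>VH. h v) = 0"
    unfolding h_def g_def using \<open>0 < card VH\<close> by (simp add: sum_subtractf)
  then have "gamma VH EH * \<bar>h v0\<bar> \<le> gamma_x VH EH h" by (rule H.gamma_mult_abs_le[OF _ uv0(2)])
  also have "\<dots> \<le> d" unfolding h_def d_def by (rule gamma_x_fiber_le[OF uv0(1)])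
  finally have h_le: "\<bar>h v0\<bar> \<le> d / gamma VH EH"
    using H.gamma_pos by (simp add: le_divide_eq mult.commute)
  have "1 = \<bar>g u0 + h v0\<bar>" using uv0(3) by (simp add: h_def)
  also have "\<dots> \<le> d / gamma VG EG + d / gamma VH EH" using g_le h_le by linarith
  finally show ?thesis unfolding d_def by (simp add: algebra_simps)
qed

lemma gamma_product_ge:
  "1 / (1 / gamma VG EG + 1 / gamma VH EH) \<le> gamma VGH EGH"
proof (rule le_gamma[OF feasible_product_ne])
  fix x assume "x \<in> feasible VGH"
  then show "1 / (1 / gamma VG EG + 1 / gamma VH EH) \<le> gamma_x VGH EGH x"
    using one_le_gamma_x_product inverse_gamma_sum_pos by (simp add: divide_le_eq mult.commute)
qed

lemma gamma_x_product_combination_le: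
  assumes "0 \<le> s" "0 \<le> t"
  shows "gamma_x VGH EGH (\<lambda>(u, v). s * a u + t * b v)
    \<le> max (s * gamma_x VG EG a) (t * gamma_x VH EH b)"
proof -
  obtain p q where edge: "p \<in> VGH" "q \<in> VGH" "EGH p q"
    by (rule product_edge_exists)
  show ?thesis
  proof (rule gamma_x_le[of VGH p q EGH, OF finite_product edge])
    fix p q assume "p \<in> VGH" "q \<in> VGH" "EGH p q"
    then obtain u v u' v' where pq: "p = (u, v)" "q = (u', v')"
      "u \<in> VG" "u' \<in> VG" "v \<in> VH" "v' \<in> VH" and "(EG u u' \<and> v = v') \<or> (u = u' \<and> EH v v')" by (cases p, cases q) auto
    then consider "EG u u'" "v = v'" | "u = u'" "EH v v'" by blast
    then show "\<bar>(\<lambda>(u, v). s * a u + t * b v) p - (\<lambda>(u, v). s * a u + t * b v) q\<bar>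
      \<le> max (s * gamma_x VG EG a) (t * gamma_x VH EH b)"
    proof cases
      case 1
      then have "\<bar>a u - a u'\<bar> \<le> gamma_x VG EG a"
        using pq by (intro edge_diff_le_gamma_x[OF G.finite_vertices])
      then have "s * \<bar>a u - a u'\<bar> \<le> s * gamma_x VG EG a" using assms by (simp add: mult_left_mono)
      then show ?thesis using 1 pq assms by (simp add: abs_mult right_diff_distrib[symmetric])
    next
      case 2
      then have "\<bar>b v - b v'\<bar> \<le> gamma_x VH EH b"
        using pq by (intro edge_diff_le_gamma_x[OF H.finite_vertices])
      then have "t * \<bar>b v - b v'\<bar> \<le> t * gamma_x VH EH b" using assms by (simp add: mult_left_mono)
      then show ?thesis using 2 pq assms by (simp add: abs_mult right_diff_distrib[symmetric])
    qed
  qed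
qed

lemma gamma_product_le_feasible_pair:
  assumes a: "a \<in> feasible VG" and b: "b \<in> feasible VH"
  shows "gamma VGH EGH \<le> 1 / (1 / gamma_x VG EG a + 1 / gamma_x VH EH b)"
proof -
  define \<alpha> \<beta> where "\<alpha> = gamma_x VG EG a" and "\<beta> = gamma_x VH EH b"
  have "0 < \<alpha>" "0 < \<beta>" unfolding \<alpha>_def \<beta>_def using G.gamma_x_pos[OF a] H.gamma_x_pos[OF b] .
  define s t where "s = \<beta> / (\<alpha> + \<beta>)" and "t = \<alpha> / (\<alpha> + \<beta>)"
  have "0 < \<alpha> + \<beta>" using \<open>0 < \<alpha>\<close> \<open>0 < \<beta>\<close> by simp
  then have st: "0 \<le> s" "0 \<le> t" "s + t = 1"
      "s * \<alpha> = \<alpha> * \<beta> / (\<alpha> + \<beta>)" "t * \<beta> = \<alpha> * \<beta> / (\<alpha> + \<beta>)"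
    using \<open>0 < \<alpha>\<close> \<open>0 < \<beta>\<close> unfolding s_def t_def by (simp_all add: add_divide_distrib[symmetric])
  obtain u1 u2 where "u1 \<in> VG" "u2 \<in> VG" "EG u1 u2" by (rule G.edge_exists)
  then obtain a' u0 where a': "a' \<in> feasible VG" "gamma_x VG EG a' = \<alpha>" "u0 \<in> VG" "a' u0 = 1"
    using feasible_normalized[OF G.finite_vertices _ _ _ a] unfolding \<alpha>_def by metis
  obtain v1 v2 where "v1 \<in> VH" "v2 \<in> VH" "EH v1 v2" by (rule H.edge_exists)
  then obtain b' v0 where b': "b' \<in> feasible VH" "gamma_x VH EH b' = \<beta>" "v0 \<in> VH" "b' v0 = 1"
    using feasible_normalized[OF H.finite_vertices _ _ _ b] unfolding \<beta>_def by metis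
  have "(\<lambda>(u, v). s * a' u + t * b' v) \<in> feasible VGH"
    using feasible_product_combination[OF G.finite_vertices H.finite_vertices a'(1) b'(1)] a' b' st
    by blast
  then have "gamma VGH EGH \<le> gamma_x VGH EGH (\<lambda>(u, v). s * a' u + t * b' v)"
    by (rule gamma_product_le_gamma_x)
  also have "\<dots> \<le> max (s * \<alpha>) (t * \<beta>)"
    using gamma_x_product_combination_le[OF st(1,2)] a'(2) b'(2) by metis
  also have "\<dots> = \<alpha> * \<beta> / (\<alpha> + \<beta>)" using st by simp
  also have "\<dots> = 1 / (1 / \<alpha> + 1 / \<beta>)" using \<open>0 < \<alpha>\<close> \<open>0 < \<beta>\<close> by (simp add: field_simps)
  finally show ?thesis unfolding \<alpha>_def \<beta>_def .
qed

lemma gamma_product_le: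
  "gamma VGH EGH \<le> 1 / (1 / gamma VG EG + 1 / gamma VH EH)"
proof -
  define \<gamma> where "\<gamma> = gamma VGH EGH"
  have "0 < 1 / (1 / gamma VG EG + 1 / gamma VH EH)" using inverse_gamma_sum_pos by simp
  also have "\<dots> \<le> \<gamma>" unfolding \<gamma>_def by (rule gamma_product_ge)
  finally have "0 < \<gamma>" .
  have pair: "1 / gamma_x VG EG a + 1 / gamma_x VH EH b \<le> 1 / \<gamma>"
    if "a \<in> feasible VG" "b \<in> feasible VH" for a b
    using gamma_product_le_feasible_pair[OF that] G.gamma_x_pos[OF that(1)] H.gamma_x_pos[OF that(2)]
      \<open>0 < \<gamma>\<close> unfolding \<gamma>_def
    by (simp add: le_divide_eq divide_le_eq add_pos_pos mult.commute)
  have "1 / gamma VG EG \<le> 1 / \<gamma> - 1 / gamma_x VH EH b" if "b \<in> feasible VH" for b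
    using pair[OF _ that] by (intro G.inverse_gamma_le) (simp add: algebra_simps)
  then have "1 / gamma VH EH \<le> 1 / \<gamma> - 1 / gamma VG EG"
    by (intro H.inverse_gamma_le) (simp add: algebra_simps)
  then have "1 / gamma VG EG + 1 / gamma VH EH \<le> 1 / \<gamma>" by simp
  then show ?thesis
    using \<open>0 < \<gamma>\<close> inverse_gamma_sum_pos unfolding \<gamma>_def
    by (simp add: le_divide_eq mult.commute)
qed

end

theorem theorem5p1:
  fixes VG :: "'a set" and EG :: "'a \<Rightarrow> 'a \<Rightarrow> bool"
    and VH :: "'b set" and EH :: "'b \<Rightarrow> 'b \<Rightarrow> bool"
  assumes "simple_graph VG EG" and "connected_graph VG EG" and "card VG \<ge> 2"
    and "simple_graph VH EH" and "connected_graph VH EH" and "card VH \<ge> 2"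
  shows "gamma (VG \<times> VH) (cart_edge EG EH) = 1 / (1 / gamma VG EG + 1 / gamma VH EH)"
proof -
  interpret cartesian_graph_pair VG EG VH EH
    using assms by (unfold_locales) simp_all
  show ?thesis using gamma_product_le gamma_product_ge by (rule antisym)
qed

end
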